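(* Let $A$ be a self-adjoint operator on a complex separable Hilbert space $\mathbb{H}$, and let $G$ be a metric operator associated with $A$, i.e. $G$ is a metric operator such that $G^{1/2}AG^{-1/2}$ is self-adjoint. Then for every nonzero $\psi\in\mathbb{H}$, $$\langle A\rangle_{\psi,G}:=\frac{\langle\psi,G^{1/2}AG^{-1/2}\psi\rangle}{\|\psi\|^2}=\frac{\langle\psi,A\psi\rangle}{\|\psi\|^2}=:\langle A\rangle_\psi .$$
   Context: A metric operator is a bounded, strictly positive, self-adjoint operator with bounded inverse. The quantity $\langle A\rangle_{\psi,G}$ is defined when $G^{-1/2}\psi\in\mathcal{D}(A)$, and $\langle A\rangle_\psi$ when $\psi\in\mathcal{D}(A)$; the inner product is linear in the second argument. *)

theory Defs
  imports "HOL-Analysis.Analysis"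
begin

text \<open>The HOL library has no complex vector spaces, so we introduce complex inner product
  spaces as a type class.  A complex inner product space is in particular a real normed
  vector space (real scalar multiplication is the restriction of complex scalar multiplication),
  which gives access to the library's topology, limits and completeness.  The inner product
  is conjugate-linear in the first and linear in the second argument.\<close>

class complex_inner = real_normed_vector +
  fixes scaleC :: "complex \<Rightarrow> 'a \<Rightarrow> 'a" (infixr \<open>*\<^sub>C\<close> 75)
    and cinner :: "'a \<Rightarrow> 'a \<Rightarrow> complex"
  assumes scaleR_scaleC: "scaleR r x = complex_of_real r *\<^sub>C x"
    and scaleC_add_right: "a *\<^sub>C (x + y) = a *\<^sub>C x + a *\<^sub>C y"
    and scaleC_add_left: "(a + b) *\<^sub>C x = a *\<^sub>C x + b *\<^sub>C x"
    and scaleC_scaleC: "a *\<^sub>C (b *\<^sub>C x) = (a * b) *\<^sub>C x"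
    and scaleC_one: "1 *\<^sub>C x = x"
    and cinner_conj: "cinner x y = cnj (cinner y x)"
    and cinner_add_right: "cinner x (y + z) = cinner x y + cinner x z"
    and cinner_scaleC_right: "cinner x (a *\<^sub>C y) = a * cinner x y"
    and cinner_pos: "x \<noteq> 0 \<Longrightarrow> 0 < Re (cinner x x)"
    and norm_cinner: "norm x = sqrt (Re (cinner x x))"

class chilbert_space = complex_inner + complete_space

definition separable_space :: "'a::topological_space itself \<Rightarrow> bool" where
  "separable_space _ \<longleftrightarrow> (\<exists>S::'a set. countable S \<and> closure S = UNIV)"

definition csubspace :: "'a::complex_inner set \<Rightarrow> bool" where
  "csubspace S \<longleftrightarrow> 0 \<in> S \<and> (\<forall>x\<in>S. \<forall>y\<in>S. x + y \<in> S) \<and> (\<forall>c. \<forall>x\<in>S. c *\<^sub>C x \<in> S)"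

definition clinear_on :: "'a::complex_inner set \<Rightarrow> ('a \<Rightarrow> 'a) \<Rightarrow> bool" where
  "clinear_on S f \<longleftrightarrow> (\<forall>x\<in>S. \<forall>y\<in>S. f (x + y) = f x + f y) \<and> (\<forall>c. \<forall>x\<in>S. f (c *\<^sub>C x) = c *\<^sub>C f x)"

text \<open>An (in general unbounded) operator is given by its domain \<open>D\<close> and its action \<open>A\<close> on \<open>D\<close>.
  The domain of the adjoint \<open>A\<^sup>*\<close>:\<close>
definition adjoint_dom :: "'a::complex_inner set \<Rightarrow> ('a \<Rightarrow> 'a) \<Rightarrow> 'a set" where
  "adjoint_dom D A = {y. \<exists>z. \<forall>x\<in>D. cinner y (A x) = cinner z x}"

text \<open>Self-adjointness \<open>A = A\<^sup>*\<close> of a densely defined linear operator: \<open>A\<close> is symmetric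
  (so \<open>A \<subseteq> A\<^sup>*\<close>) and \<open>dom A\<^sup>* \<subseteq> dom A\<close>.\<close>
definition self_adjoint_op :: "'a::complex_inner set \<Rightarrow> ('a \<Rightarrow> 'a) \<Rightarrow> bool" where
  "self_adjoint_op D A \<longleftrightarrow> csubspace D \<and> clinear_on D A \<and> closure D = UNIV \<and>
     (\<forall>x\<in>D. \<forall>y\<in>D. cinner (A x) y = cinner x (A y)) \<and> adjoint_dom D A \<subseteq> D"

definition bounded_op :: "('a::complex_inner \<Rightarrow> 'a) \<Rightarrow> bool" where
  "bounded_op T \<longleftrightarrow> clinear_on UNIV T \<and> (\<exists>K. \<forall>x. norm (T x) \<le> K * norm x)"

definition bounded_self_adjoint :: "('a::complex_inner \<Rightarrow> 'a) \<Rightarrow> bool" where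
  "bounded_self_adjoint T \<longleftrightarrow> bounded_op T \<and> (\<forall>x y. cinner (T x) y = cinner x (T y))"

definition positive_op :: "('a::complex_inner \<Rightarrow> 'a) \<Rightarrow> bool" where
  "positive_op T \<longleftrightarrow> (\<forall>x. 0 \<le> Re (cinner x (T x)))"

definition strictly_positive_op :: "('a::complex_inner \<Rightarrow> 'a) \<Rightarrow> bool" where
  "strictly_positive_op T \<longleftrightarrow> (\<forall>x. x \<noteq> 0 \<longrightarrow> 0 < Re (cinner x (T x)))"

definition metric_operator :: "('a::complex_inner \<Rightarrow> 'a) \<Rightarrow> bool" where
  "metric_operator G \<longleftrightarrow> bounded_self_adjoint G \<and> strictly_positive_op G \<and>
     bij G \<and> bounded_op (inv G)"

definition op_sqrt :: "('a::complex_inner \<Rightarrow> 'a) \<Rightarrow> 'a \<Rightarrow> 'a" where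
  "op_sqrt G = (THE S. bounded_self_adjoint S \<and> positive_op S \<and> S \<circ> S = G)"

definition op_inv_sqrt :: "('a::complex_inner \<Rightarrow> 'a) \<Rightarrow> 'a \<Rightarrow> 'a" where
  "op_inv_sqrt G = inv (op_sqrt G)"

definition conj_dom :: "('a::complex_inner \<Rightarrow> 'a) \<Rightarrow> 'a set \<Rightarrow> 'a set" where
  "conj_dom G D = {x. op_inv_sqrt G x \<in> D}"

definition conj_op :: "('a::complex_inner \<Rightarrow> 'a) \<Rightarrow> ('a \<Rightarrow> 'a) \<Rightarrow> 'a \<Rightarrow> 'a" where
  "conj_op G A = (\<lambda>x. op_sqrt G (A (op_inv_sqrt G x)))"

end

theory Submission
  imports Defs "HOL-Computational_Algebra.Formal_Power_Series"
begin

(* Testing the symmetry of G^(1/2) A G^(-1/2) on the vectors G^(1/2) v and G^(1/2) w with v, w in D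
   gives <A v, G w> = <G v, A w>; since A is self-adjoint, G maps D into itself and commutes with A
   there. The positive square root G^(1/2) is the operator-norm limit of the binomial series
   sqrt M * (sum over n of (1/2 choose n) (-1)^n (I - G/M)^n), so it inherits this commutation.
   Conversely, if G^(1/2) y lies in D then y lies in the domain of the adjoint of G^(1/2) A G^(-1/2),
   which is self-adjoint, so G^(-1/2) y lies in D. Hence G^(1/2) A G^(-1/2) has domain D and equals A
   there. *)

section \<open>Complex inner product spaces\<close>

subclass (in chilbert_space) banach ..

lemma cinner_add_left: "cinner (x + y) (z::'a::complex_inner) = cinner x z + cinner y z"
  by (metis cinner_conj cinner_add_right complex_cnj_add)

lemma cinner_scaleC_left: "cinner (c *\<^sub>C x) (y::'a::complex_inner) = cnj c * cinner x y"
  by (metis cinner_conj cinner_scaleC_right complex_cnj_mult complex_cnj_cnj)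

lemma cinner_zero_right [simp]: "cinner (x::'a::complex_inner) 0 = 0"
  using cinner_add_right[of x 0 0] by simp

lemma cinner_zero_left [simp]: "cinner 0 (x::'a::complex_inner) = 0"
  using cinner_add_left[of 0 0 x] by simp

lemma cinner_minus_right: "cinner x (- y::'a::complex_inner) = - cinner x y"
  using cinner_add_right[of x y "- y"] by (simp add: eq_neg_iff_add_eq_0 add.commute)

lemma cinner_minus_left: "cinner (- x) (y::'a::complex_inner) = - cinner x y"
  using cinner_add_left[of x "- x" y] by (simp add: eq_neg_iff_add_eq_0 add.commute)

lemma cinner_diff_right: "cinner x (y - z::'a::complex_inner) = cinner x y - cinner x z"
  using cinner_add_right[of x y "- z"] by (simp add: cinner_minus_right)

lemma cinner_diff_left: "cinner (x - y) (z::'a::complex_inner) = cinner x z - cinner y z"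
  using cinner_add_left[of x "- y" z] by (simp add: cinner_minus_left)

lemma cinner_scaleR_right: "cinner x (r *\<^sub>R y::'a::complex_inner) = of_real r * cinner x y"
  by (simp add: scaleR_scaleC cinner_scaleC_right)

lemma cinner_scaleR_left: "cinner (r *\<^sub>R x) (y::'a::complex_inner) = of_real r * cinner x y"
  by (simp add: scaleR_scaleC cinner_scaleC_left)

lemma Re_cinner_commute: "Re (cinner x (y::'a::complex_inner)) = Re (cinner y x)"
  by (subst cinner_conj) simp

lemma Im_cinner_self [simp]: "Im (cinner x (x::'a::complex_inner)) = 0"
  by (metis cinner_conj cnj.simps(2) neg_equal_zero)

lemma Re_cinner_self_nonneg: "0 \<le> Re (cinner x (x::'a::complex_inner))"
  by (cases "x = 0") (auto intro: less_imp_le cinner_pos)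

lemma power2_norm_eq_cinner: "(norm x)\<^sup>2 = Re (cinner x (x::'a::complex_inner))"
  by (simp add: norm_cinner Re_cinner_self_nonneg)

lemma cinner_self_eq_power2_norm: "cinner x x = of_real ((norm (x::'a::complex_inner))\<^sup>2)"
  by (simp add: power2_norm_eq_cinner complex_eq_iff)

lemma norm_scaleC: "norm (c *\<^sub>C x) = cmod c * norm (x::'a::complex_inner)"
proof -
  have "cinner (c *\<^sub>C x) (c *\<^sub>C x) = (c * cnj c) * cinner x x"
    by (simp add: cinner_scaleC_left cinner_scaleC_right mult.assoc mult.left_commute)
  also have "\<dots> = of_real ((cmod c * norm x)\<^sup>2)"
    by (simp add: cinner_self_eq_power2_norm complex_norm_square[symmetric] power_mult_distrib)
  finally have "cinner (c *\<^sub>C x) (c *\<^sub>C x) = of_real ((cmod c * norm x)\<^sup>2)" .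
  then have "(norm (c *\<^sub>C x))\<^sup>2 = (cmod c * norm x)\<^sup>2"
    by (simp only: cinner_self_eq_power2_norm of_real_eq_iff)
  then show ?thesis
    by (simp add: power2_eq_iff_nonneg)
qed

lemma scaleC_scaleR_commute: "c *\<^sub>C (r *\<^sub>R x) = r *\<^sub>R (c *\<^sub>C (x::'a::complex_inner))"
  by (simp add: scaleR_scaleC scaleC_scaleC mult.commute)

lemma scaleC_diff_right: "c *\<^sub>C (x - y) = c *\<^sub>C x - c *\<^sub>C (y::'a::complex_inner)"
proof -
  have "c *\<^sub>C (x - y) + c *\<^sub>C y = c *\<^sub>C x"
    by (metis diff_add_cancel scaleC_add_right)
  then show ?thesis
    by (simp add: eq_diff_eq)
qed

lemma bounded_linear_scaleC_right: "bounded_linear (\<lambda>x::'a::complex_inner. c *\<^sub>C x)"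
  by (rule bounded_linear_intro[where K = "cmod c"])
    (auto simp: scaleC_add_right scaleC_scaleR_commute norm_scaleC mult.commute)

lemma quadratic_nonneg_imp_discriminant_le:
  fixes a b c :: real
  assumes nonneg: "\<And>t. 0 \<le> a + 2 * t * b + t\<^sup>2 * c" and "0 \<le> c"
  shows "b\<^sup>2 \<le> a * c"
proof (cases "c = 0")
  case True
  have "b = 0"
  proof (rule ccontr)
    assume "b \<noteq> 0"
    then show False
      using nonneg[of "- (a + 1) / (2 * b)"] True by (simp add: field_simps)
  qed
  then show ?thesis
    using True by simp
next
  case False
  with \<open>0 \<le> c\<close> have "0 < c" by simp
  have "0 \<le> a + 2 * (- b / c) * b + (- b / c)\<^sup>2 * c"
    by (rule nonneg)
  also have "\<dots> = a - b\<^sup>2 / c"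
    using \<open>0 < c\<close> by (simp add: field_simps power2_eq_square)
  finally show ?thesis
    using \<open>0 < c\<close> by (simp add: field_simps)
qed

lemma positive_op_Cauchy_Schwarz:
  fixes P :: "'a::complex_inner \<Rightarrow> 'a"
  assumes "linear P" and sym: "\<And>x y. cinner (P x) y = cinner x (P y)" and pos: "positive_op P"
  shows "(Re (cinner u (P v)))\<^sup>2 \<le> Re (cinner u (P u)) * Re (cinner v (P v))"
proof (rule quadratic_nonneg_imp_discriminant_le)
  fix t :: real
  have "Re (cinner v (P u)) = Re (cinner u (P v))"
    by (metis Re_cinner_commute sym)
  then have "Re (cinner (u + t *\<^sub>R v) (P (u + t *\<^sub>R v)))
      = Re (cinner u (P u)) + 2 * t * Re (cinner u (P v)) + t\<^sup>2 * Re (cinner v (P v))"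
    by (simp add: linear_add[OF \<open>linear P\<close>] linear_scale[OF \<open>linear P\<close>] cinner_add_left
        cinner_add_right cinner_scaleR_left cinner_scaleR_right power2_eq_square algebra_simps)
  then show "0 \<le> Re (cinner u (P u)) + 2 * t * Re (cinner u (P v)) + t\<^sup>2 * Re (cinner v (P v))"
    using pos unfolding positive_op_def by metis
qed (use pos in \<open>simp add: positive_op_def\<close>)

lemma positive_op_eq_zero:
  fixes P :: "'a::complex_inner \<Rightarrow> 'a"
  assumes "linear P" "\<And>x y. cinner (P x) y = cinner x (P y)" "positive_op P"
    and "Re (cinner y (P y)) = 0"
  shows "P y = 0"
proof -
  have "(Re (cinner (P y) (P y)))\<^sup>2 \<le> Re (cinner (P y) (P (P y))) * Re (cinner y (P y))"
    by (rule positive_op_Cauchy_Schwarz[OF assms(1-3)])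
  then show ?thesis
    using assms(4) by (simp add: power2_norm_eq_cinner[symmetric])
qed

lemma cinner_Cauchy_Schwarz: "cmod (cinner u v) \<le> norm u * norm (v::'a::complex_inner)"
proof (cases "cinner u v = 0")
  case False
  let ?c = "cinner u v"
  have "positive_op (id::'a \<Rightarrow> 'a)"
    by (simp add: positive_op_def Re_cinner_self_nonneg)
  then have Re_bound: "(Re (cinner u w))\<^sup>2 \<le> (norm u)\<^sup>2 * (norm w)\<^sup>2" for w
    using positive_op_Cauchy_Schwarz[of id u w] by (simp add: power2_norm_eq_cinner linear_id)
  have "cinner u (cnj ?c *\<^sub>C v) = of_real ((cmod ?c)\<^sup>2)"
    by (metis complex_norm_square cinner_scaleC_right mult.commute)
  then have "((cmod ?c)\<^sup>2)\<^sup>2 \<le> (norm u)\<^sup>2 * (norm (cnj ?c *\<^sub>C v))\<^sup>2"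
    using Re_bound[of "cnj ?c *\<^sub>C v"] by simp
  also have "\<dots> = (cmod ?c)\<^sup>2 * ((norm u)\<^sup>2 * (norm v)\<^sup>2)"
    by (simp add: norm_scaleC power_mult_distrib)
  finally have "(cmod ?c)\<^sup>2 * (cmod ?c)\<^sup>2 \<le> (cmod ?c)\<^sup>2 * ((norm u)\<^sup>2 * (norm v)\<^sup>2)"
    by (simp only: power2_eq_square)
  then have "(cmod ?c)\<^sup>2 \<le> (norm u)\<^sup>2 * (norm v)\<^sup>2"
    using False by (simp only: mult_le_cancel_left) (simp add: not_le)
  then have "(cmod ?c)\<^sup>2 \<le> (norm u * norm v)\<^sup>2"
    by (simp add: power_mult_distrib)
  then show ?thesis
    by (rule power2_le_imp_le) simp
qed simp

lemma bounded_linear_cinner_right: "bounded_linear (\<lambda>y. cinner (x::'a::complex_inner) y)"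
  by (rule bounded_linear_intro[where K = "norm x"])
    (auto simp: cinner_add_right cinner_scaleR_right scaleR_conv_of_real mult.commute
      intro: order_trans[OF cinner_Cauchy_Schwarz])

lemma bounded_linear_cinner_left: "bounded_linear (\<lambda>y. cinner y (x::'a::complex_inner))"
  by (rule bounded_linear_intro[where K = "norm x"])
    (auto simp: cinner_add_left cinner_scaleR_left scaleR_conv_of_real cinner_Cauchy_Schwarz)

lemma dense_cinner_eq_zero:
  fixes D :: "'a::complex_inner set"
  assumes "closure D = UNIV" and "\<And>v. v \<in> D \<Longrightarrow> cinner w v = 0"
  shows "w = 0"
proof -
  have "closed {v. cinner w v = 0}"
    by (intro closed_Collect_eq continuous_on_const linear_continuous_on bounded_linear_cinner_right)
  then have "closure D \<subseteq> {v. cinner w v = 0}"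
    using assms(2) by (intro closure_minimal) auto
  then have "cinner w w = 0"
    using assms(1) by auto
  then show ?thesis
    using cinner_pos[of w] by (cases "w = 0") auto
qed

section \<open>The binomial series of the square root\<close>

lemma Cauchy_product_sums_bilinear:
  fixes a :: "nat \<Rightarrow> 'a::banach" and b :: "nat \<Rightarrow> 'b::banach" and prod :: "'a \<Rightarrow> 'b \<Rightarrow> 'c::banach"
  assumes prod: "bounded_bilinear prod"
    and a: "summable (\<lambda>k. norm (a k))" and b: "summable (\<lambda>k. norm (b k))"
  shows "(\<lambda>k. \<Sum>i\<le>k. prod (a i) (b (k - i))) sums prod (\<Sum>k. a k) (\<Sum>k. b k)"
proof -
  obtain K where K: "\<And>x y. norm (prod x y) \<le> norm x * norm y * K" "0 < K"
    using bounded_bilinear.pos_bounded[OF prod] by blast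
  let ?square = "\<lambda>n::nat. {..<n} \<times> {..<n}" and ?triangle = "\<lambda>n::nat. {(i, j). i + j < n}"
  let ?g = "\<lambda>(i, j). prod (a i) (b j)" and ?f = "\<lambda>(i, j). norm (a i) * norm (b j)"
  have triangle_square: "?triangle n \<subseteq> ?square n" for n
    by auto
  have square_sum: "prod (\<Sum>k<n. a k) (\<Sum>k<n. b k) = sum ?g (?square n)" for n
    unfolding bounded_bilinear.sum_left[OF prod] unfolding bounded_bilinear.sum_right[OF prod]
    by (rule sum.cartesian_product)
  have "(\<lambda>n. prod (\<Sum>k<n. a k) (\<Sum>k<n. b k)) \<longlonglongrightarrow> prod (\<Sum>k. a k) (\<Sum>k. b k)"
    by (intro bounded_bilinear.tendsto[OF prod] summable_LIMSEQ
        summable_norm_cancel[OF a] summable_norm_cancel[OF b])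
  then have square_g: "(\<lambda>n. sum ?g (?square n)) \<longlonglongrightarrow> prod (\<Sum>k. a k) (\<Sum>k. b k)"
    by (simp only: square_sum)
  \<comment> \<open>The library's Cauchy product for the real series of norms controls the corner
    outside the triangle.\<close>
  have "(\<lambda>n. sum ?f (?square n)) \<longlonglongrightarrow> (\<Sum>k. norm (a k)) * (\<Sum>k. norm (b k))"
    using tendsto_mult[OF summable_LIMSEQ[OF a] summable_LIMSEQ[OF b]]
    by (simp add: sum_product sum.cartesian_product)
  moreover have "(\<lambda>n. sum ?f (?triangle n)) \<longlonglongrightarrow> (\<Sum>k. norm (a k)) * (\<Sum>k. norm (b k))"
    using Cauchy_product_sums[of "\<lambda>k. norm (a k)" "\<lambda>k. norm (b k)"] a b
    by (simp add: sums_def sum.triangle_reindex)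
  ultimately have "(\<lambda>n. sum ?f (?square n) - sum ?f (?triangle n)) \<longlonglongrightarrow> 0"
    using tendsto_diff by fastforce
  then have corner_f: "(\<lambda>n. sum ?f (?square n - ?triangle n)) \<longlonglongrightarrow> 0"
    by (simp only: sum_diff finite_SigmaI finite_lessThan triangle_square)
  have "norm (sum ?g (?square n - ?triangle n)) \<le> norm (sum ?f (?square n - ?triangle n)) * K" for n
  proof -
    have "norm (sum ?g (?square n - ?triangle n)) \<le> (\<Sum>p \<in> ?square n - ?triangle n. ?f p * K)"
      by (rule order_trans[OF norm_sum sum_mono]) (auto intro: K(1))
    also have "\<dots> \<le> norm (sum ?f (?square n - ?triangle n)) * K"
      using K(2) by (simp add: sum_distrib_right[symmetric])
    finally show ?thesis .
  qed
  then have "(\<lambda>n. sum ?g (?square n - ?triangle n)) \<longlonglongrightarrow> 0"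
    by (intro tendsto_0_le[OF corner_f] always_eventually) blast
  then have "(\<lambda>n. sum ?g (?square n) - sum ?g (?triangle n)) \<longlonglongrightarrow> 0"
    by (simp only: sum_diff finite_SigmaI finite_lessThan triangle_square)
  with square_g have "(\<lambda>n. sum ?g (?triangle n)) \<longlonglongrightarrow> prod (\<Sum>k. a k) (\<Sum>k. b k)"
    by (rule Lim_transform2)
  then show ?thesis
    by (simp only: sums_def sum.triangle_reindex)
qed

text \<open>The Taylor coefficients of \<open>\<surd>(1 - t)\<close>.\<close>
definition sqrt_coeff :: "nat \<Rightarrow> real" where
  "sqrt_coeff n = (-1) ^ n * ((1/2) gchoose n)"

lemma neg_half_gbinomial_sign: "0 \<le> (-1) ^ k * ((-1/2::real) gchoose k)"
proof -
  have "(-1/2::real) gchoose k = (-1) ^ k * ((of_nat k - (-1/2) - 1) gchoose k)"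
    by (rule gbinomial_negated_upper)
  then have "(-1) ^ k * ((-1/2::real) gchoose k) = (of_nat k - 1/2) gchoose k"
    by (simp add: power_mult_distrib[symmetric] mult.assoc[symmetric])
  also have "\<dots> = (\<Prod>i = 0..<k. (of_nat k - 1/2) - of_nat i) / fact k"
    using gbinomial_mult_fact'[of "of_nat k - 1/2::real" k] by (simp add: field_simps)
  also have "\<dots> \<ge> 0"
    by (intro divide_nonneg_pos prod_nonneg) auto
  finally show ?thesis .
qed

lemma sqrt_coeff_0 [simp]: "sqrt_coeff 0 = 1"
  by (simp add: sqrt_coeff_def)

lemma sqrt_coeff_nonpos: "0 < n \<Longrightarrow> sqrt_coeff n \<le> 0"
proof -
  assume "0 < n"
  then obtain k where k: "n = Suc k"
    using gr0_conv_Suc by blast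
  have "real (Suc k) * ((1/2::real) gchoose Suc k) = 1/2 * ((-1/2) gchoose k)"
    using gbinomial_absorption[of k "1/2::real"] by simp
  then have "sqrt_coeff n = - ((-1) ^ k * ((-1/2) gchoose k)) / (2 * real (Suc k))"
    by (simp add: sqrt_coeff_def k field_simps)
  then show ?thesis
    using neg_half_gbinomial_sign[of k] by simp
qed

lemma sum_sqrt_coeff_nonneg: "0 \<le> (\<Sum>k<n. sqrt_coeff k)"
proof (cases n)
  case (Suc m)
  have "(\<Sum>k\<le>m. sqrt_coeff k) = (-1) ^ m * ((-1/2) gchoose m)"
    using gbinomial_sum_lower_neg[of "1/2::real" m] by (simp add: sqrt_coeff_def mult.commute)
  then show ?thesis
    using neg_half_gbinomial_sign[of m] by (simp add: Suc lessThan_Suc_atMost)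
qed simp

lemma summable_abs_sqrt_coeff: "summable (\<lambda>n. \<bar>sqrt_coeff n\<bar>)"
proof (rule summableI_nonneg_bounded[where x = 2])
  fix n
  have "\<bar>sqrt_coeff k\<bar> = (if k = 0 then 2 else 0) - sqrt_coeff k" for k
    using sqrt_coeff_nonpos[of k] by auto
  then have "(\<Sum>k<n. \<bar>sqrt_coeff k\<bar>) = (if 0 < n then 2 else 0) - (\<Sum>k<n. sqrt_coeff k)"
    by (simp add: sum_subtractf)
  then show "(\<Sum>k<n. \<bar>sqrt_coeff k\<bar>) \<le> 2"
    using sum_sqrt_coeff_nonneg[of n] by simp
qed simp

lemma summable_sqrt_coeff: "summable sqrt_coeff"
  using summable_abs_sqrt_coeff summable_rabs_cancel by blast

lemma suminf_sqrt_coeff_nonneg: "0 \<le> suminf sqrt_coeff"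
  by (rule LIMSEQ_le_const[OF summable_LIMSEQ[OF summable_sqrt_coeff]])
    (use sum_sqrt_coeff_nonneg in blast)

lemma sqrt_coeff_convolution:
  "(\<Sum>i\<le>k. sqrt_coeff i * sqrt_coeff (k - i)) = (if k = 0 then 1 else if k = 1 then -1 else 0)"
proof -
  have "(\<Sum>i\<le>k. sqrt_coeff i * sqrt_coeff (k - i))
      = (-1) ^ k * (\<Sum>i\<le>k. ((1/2::real) gchoose i) * ((1/2) gchoose (k - i)))"
    unfolding sum_distrib_left
  proof (rule sum.cong)
    fix i assume "i \<in> {..k}"
    then have "(-1::real) ^ i * (-1) ^ (k - i) = (-1) ^ k"
      by (simp add: power_add[symmetric])
    then show "sqrt_coeff i * sqrt_coeff (k - i)
        = (-1) ^ k * (((1/2::real) gchoose i) * ((1/2) gchoose (k - i)))"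
      by (simp add: sqrt_coeff_def algebra_simps)
  qed simp
  also have "(\<Sum>i\<le>k. ((1/2::real) gchoose i) * ((1/2) gchoose (k - i))) = of_nat (1 choose k)"
    using gbinomial_Vandermonde[of "1/2::real" "1/2" k] by (simp add: atLeast0AtMost binomial_gbinomial)
  finally show ?thesis
    by (cases k) (auto simp: binomial_eq_0)
qed

section \<open>Square roots of bounded positive operators\<close>

lemma bounded_op_bounded_linear:
  assumes "bounded_op (T::'a::complex_inner \<Rightarrow> 'a)"
  shows "bounded_linear T"
proof -
  from assms obtain K where "\<And>x. norm (T x) \<le> K * norm x" and "clinear_on UNIV T"
    unfolding bounded_op_def by blast
  then show ?thesis
    by (intro bounded_linear_intro[where K = K]) (auto simp: clinear_on_def scaleR_scaleC mult.commute)
qed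

lemma bounded_op_scaleC: "bounded_op T \<Longrightarrow> T (c *\<^sub>C x) = c *\<^sub>C T x"
  by (simp add: bounded_op_def clinear_on_def)

lemma bounded_opI:
  assumes "bounded_linear (T::'a::complex_inner \<Rightarrow> 'a)" and "\<And>c x. T (c *\<^sub>C x) = c *\<^sub>C T x"
  shows "bounded_op T"
proof -
  obtain K where "\<And>x. norm (T x) \<le> norm x * K"
    using bounded_linear.bounded[OF assms(1)] by blast
  then show ?thesis
    using linear_add[OF bounded_linear.linear[OF assms(1)]] assms(2)
    by (auto simp: bounded_op_def clinear_on_def mult.commute intro!: exI[of _ K])
qed

lemma self_adjoint_op_adjointI:
  assumes A: "self_adjoint_op D A" and adj: "\<And>u. u \<in> D \<Longrightarrow> cinner w (A u) = cinner z u"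
  shows "w \<in> D \<and> A w = z"
proof
  show w: "w \<in> D"
    using A adj unfolding self_adjoint_op_def adjoint_dom_def by blast
  have "A w - z = 0"
  proof (rule dense_cinner_eq_zero)
    show "closure D = UNIV"
      using A by (simp add: self_adjoint_op_def)
    fix u assume "u \<in> D"
    then show "cinner (A w - z) u = 0"
      using A w adj[of u] by (simp add: self_adjoint_op_def cinner_diff_left)
  qed
  then show "A w = z"
    by simp
qed

locale sqrt_construction =
  fixes G :: "'a::chilbert_space \<Rightarrow> 'a" and M :: real
  assumes self_adjoint: "bounded_self_adjoint G" and positive: "positive_op G"
    and norm_le: "\<And>x. norm (G x) \<le> M * norm x" and M_pos: "0 < M"
begin

lemma G_linear: "linear G"
  using self_adjoint bounded_op_bounded_linear bounded_linear.linear
  unfolding bounded_self_adjoint_def by blast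

lemma G_scaleC: "G (c *\<^sub>C x) = c *\<^sub>C G x"
  using self_adjoint bounded_op_scaleC unfolding bounded_self_adjoint_def by blast

lemma G_symmetric: "cinner (G x) y = cinner x (G y)"
  using self_adjoint unfolding bounded_self_adjoint_def by blast

lemma power2_norm_G_le: "(norm (G x))\<^sup>2 \<le> M * Re (cinner x (G x))"
proof (cases "G x = 0")
  case False
  have "(Re (cinner (G x) (G x)))\<^sup>2 \<le> Re (cinner (G x) (G (G x))) * Re (cinner x (G x))"
    using positive_op_Cauchy_Schwarz[OF G_linear G_symmetric positive] .
  also have "Re (cinner (G x) (G (G x))) \<le> M * (norm (G x))\<^sup>2"
  proof -
    have "Re (cinner (G x) (G (G x))) \<le> norm (G x) * norm (G (G x))"
      using complex_Re_le_cmod cinner_Cauchy_Schwarz by (rule order_trans)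
    also have "\<dots> \<le> norm (G x) * (M * norm (G x))"
      by (intro mult_left_mono norm_le) simp
    finally show ?thesis
      by (simp add: power2_eq_square algebra_simps)
  qed
  finally have "(norm (G x))\<^sup>2 * (norm (G x))\<^sup>2 \<le> (norm (G x))\<^sup>2 * (M * Re (cinner x (G x)))"
    using positive unfolding positive_op_def
    by (simp add: power2_norm_eq_cinner[symmetric] power2_eq_square mult_right_mono algebra_simps)
  moreover have "0 < (norm (G x))\<^sup>2"
    using False by simp
  ultimately show ?thesis
    by (simp only: mult_le_cancel_left_pos)
qed (use positive M_pos in \<open>simp add: positive_op_def\<close>)

text \<open>Since \<open>0 \<le> G \<le> M\<close>, the operator \<open>X\<close> with \<open>G = M (I - X)\<close> satisfies \<open>0 \<le> X \<le> I\<close>, so the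
  binomial series of \<open>\<surd>(I - X)\<close> converges in operator norm.\<close>
definition X :: "'a \<Rightarrow> 'a" where
  "X x = x - (1 / M) *\<^sub>R G x"

lemma linear_X: "linear X"
  by (rule linearI) (simp_all add: X_def linear_add[OF G_linear] linear_scale[OF G_linear] algebra_simps)

lemma X_scaleC: "X (c *\<^sub>C x) = c *\<^sub>C X x"
  by (simp add: X_def G_scaleC scaleC_diff_right scaleC_scaleR_commute)

lemma X_symmetric: "cinner (X x) y = cinner x (X y)"
  by (simp add: X_def cinner_diff_left cinner_diff_right cinner_scaleR_left cinner_scaleR_right G_symmetric)

lemma norm_X_le: "norm (X x) \<le> norm x"
proof -
  let ?s = "1 / M" and ?r = "Re (cinner x (G x))"
  have "(norm (X x))\<^sup>2 = (norm x)\<^sup>2 - 2 * ?s * ?r + ?s\<^sup>2 * (norm (G x))\<^sup>2"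
    unfolding X_def power2_norm_eq_cinner using Re_cinner_commute[of "G x" x]
    by (simp add: cinner_diff_left cinner_diff_right cinner_scaleR_left cinner_scaleR_right
        power2_eq_square algebra_simps)
  also have "\<dots> \<le> (norm x)\<^sup>2 - 2 * ?s * ?r + ?s\<^sup>2 * (M * ?r)"
    using power2_norm_G_le[of x] M_pos by (intro add_left_mono mult_left_mono) auto
  also have "\<dots> = (norm x)\<^sup>2 - ?s * ?r"
    using M_pos by (simp add: power2_eq_square field_simps)
  also have "\<dots> \<le> (norm x)\<^sup>2"
    using positive M_pos by (simp add: positive_op_def)
  finally show ?thesis
    by (simp add: power2_le_iff_abs_le)
qed

lemma bounded_linear_X_pow: "bounded_linear (X ^^ n)"
proof -
  have X: "bounded_linear X"
    using linear_X norm_X_le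
    by (auto simp: bounded_linear_def bounded_linear_axioms_def intro!: exI[of _ 1])
  show ?thesis
    by (induction n) (auto simp: o_def id_def intro: bounded_linear_compose[OF X] bounded_linear_ident)
qed

lemma norm_X_pow_le: "norm ((X ^^ n) x) \<le> norm x"
  by (induction n) (auto intro: order_trans[OF norm_X_le])

lemma X_pow_symmetric: "cinner ((X ^^ n) x) y = cinner x ((X ^^ n) y)"
  by (induction n arbitrary: x y) (auto simp: X_symmetric funpow_swap1)

definition X_pow :: "nat \<Rightarrow> 'a \<Rightarrow>\<^sub>L 'a" where
  "X_pow n = Blinfun (X ^^ n)"

lemma X_pow_apply [simp]: "blinfun_apply (X_pow n) = X ^^ n"
  unfolding X_pow_def by (rule bounded_linear_Blinfun_apply[OF bounded_linear_X_pow])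

lemma summable_norm_root_series: "summable (\<lambda>n. norm (sqrt_coeff n *\<^sub>R X_pow n))"
proof (rule summable_comparison_test[OF _ summable_abs_sqrt_coeff], intro exI allI impI)
  fix n
  have "norm (X_pow n) \<le> 1"
    by (rule norm_blinfun_bound) (auto intro: norm_X_pow_le)
  then show "norm (norm (sqrt_coeff n *\<^sub>R X_pow n)) \<le> \<bar>sqrt_coeff n\<bar>"
    by (simp add: mult_left_le)
qed

definition root_series :: "'a \<Rightarrow>\<^sub>L 'a" where
  "root_series = (\<Sum>n. sqrt_coeff n *\<^sub>R X_pow n)"

lemma summable_root_series_apply: "summable (\<lambda>n. sqrt_coeff n *\<^sub>R (X ^^ n) x)"
  using bounded_linear.summable[OF blinfun.bounded_linear_left
      summable_norm_cancel[OF summable_norm_root_series], of x]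
  by (simp add: blinfun.scaleR_left)

lemma root_series_apply: "blinfun_apply root_series x = (\<Sum>n. sqrt_coeff n *\<^sub>R (X ^^ n) x)"
  using bounded_linear.suminf[OF blinfun.bounded_linear_left
      summable_norm_cancel[OF summable_norm_root_series], of x]
  by (simp add: root_series_def blinfun.scaleR_left)

lemma root_series_square: "blinfun_apply root_series (blinfun_apply root_series x) = x - X x"
proof -
  let ?c = "\<lambda>k. (\<Sum>i\<le>k. sqrt_coeff i * sqrt_coeff (k - i)) *\<^sub>R X_pow k"
  have "(\<lambda>k. \<Sum>i\<le>k. (sqrt_coeff i *\<^sub>R X_pow i) o\<^sub>L (sqrt_coeff (k - i) *\<^sub>R X_pow (k - i)))
      sums (root_series o\<^sub>L root_series)"
    unfolding root_series_def
    by (rule Cauchy_product_sums_bilinear[OF bounded_bilinear_blinfun_compose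
          summable_norm_root_series summable_norm_root_series])
  moreover have "(sqrt_coeff i *\<^sub>R X_pow i) o\<^sub>L (sqrt_coeff (k - i) *\<^sub>R X_pow (k - i))
      = (sqrt_coeff i * sqrt_coeff (k - i)) *\<^sub>R X_pow k" if "i \<le> k" for i k
  proof (rule blinfun_eqI)
    fix y
    have "(X ^^ i) ((X ^^ (k - i)) y) = (X ^^ k) y"
      using that by (metis funpow_add le_add_diff_inverse o_apply)
    then show "blinfun_apply ((sqrt_coeff i *\<^sub>R X_pow i) o\<^sub>L (sqrt_coeff (k - i) *\<^sub>R X_pow (k - i))) y
        = blinfun_apply ((sqrt_coeff i * sqrt_coeff (k - i)) *\<^sub>R X_pow k) y"
      by (simp add: blinfun.scaleR_left linear_scale[OF bounded_linear.linear[OF bounded_linear_X_pow]])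
  qed
  ultimately have "?c sums (root_series o\<^sub>L root_series)"
    by (simp add: scaleR_sum_left)
  moreover have "?c sums (\<Sum>k\<in>{0, 1}. ?c k)"
    by (rule sums_finite) (auto simp: sqrt_coeff_convolution)
  ultimately have "root_series o\<^sub>L root_series = (\<Sum>k\<in>{0, 1}. ?c k)"
    using sums_unique2 by blast
  then have "blinfun_apply (root_series o\<^sub>L root_series) x = blinfun_apply (\<Sum>k\<in>{0, 1}. ?c k) x"
    by simp
  then show ?thesis
    by (simp add: sqrt_coeff_convolution blinfun.diff_left)
qed

lemma root_series_commute:
  assumes R: "bounded_linear R" and RX: "\<And>x. R (X x) = X (R x)"
  shows "R (blinfun_apply root_series x) = blinfun_apply root_series (R x)"
proof -
  have "R ((X ^^ n) x) = (X ^^ n) (R x)" for n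
    using RX by (induction n) auto
  then have "R (blinfun_apply root_series x) = (\<Sum>n. sqrt_coeff n *\<^sub>R (X ^^ n) (R x))"
    unfolding root_series_apply bounded_linear.suminf[OF R summable_root_series_apply]
    by (simp add: linear_scale[OF bounded_linear.linear[OF R]])
  then show ?thesis
    by (simp add: root_series_apply)
qed

lemma cinner_root_series_left:
  "cinner (blinfun_apply root_series x) y = (\<Sum>n. of_real (sqrt_coeff n) * cinner ((X ^^ n) x) y)"
  unfolding root_series_apply bounded_linear.suminf[OF bounded_linear_cinner_left summable_root_series_apply]
  by (simp add: cinner_scaleR_left)

lemma cinner_root_series_right:
  "cinner y (blinfun_apply root_series x) = (\<Sum>n. of_real (sqrt_coeff n) * cinner y ((X ^^ n) x))"
  unfolding root_series_apply bounded_linear.suminf[OF bounded_linear_cinner_right summable_root_series_apply]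
  by (simp add: cinner_scaleR_right)

lemma root_series_symmetric:
  "cinner (blinfun_apply root_series x) y = cinner x (blinfun_apply root_series y)"
  by (simp add: cinner_root_series_left cinner_root_series_right X_pow_symmetric)

text \<open>All coefficients but the first are \<open>\<le> 0\<close> and \<open>Re \<langle>x, X\<^sup>n x\<rangle> \<le> \<parallel>x\<parallel>\<^sup>2\<close>, so the series is
  bounded below by \<open>(\<Sum>n. sqrt_coeff n) \<parallel>x\<parallel>\<^sup>2\<close>.\<close>
lemma root_series_positive: "0 \<le> Re (cinner x (blinfun_apply root_series x))"
proof -
  have summable: "summable (\<lambda>n. of_real (sqrt_coeff n) * cinner x ((X ^^ n) x))"
    using bounded_linear.summable[OF bounded_linear_cinner_right summable_root_series_apply]
    by (simp add: cinner_scaleR_right)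
  have term_ge: "sqrt_coeff n * (norm x)\<^sup>2 \<le> Re (of_real (sqrt_coeff n) * cinner x ((X ^^ n) x))" for n
  proof (cases "n = 0")
    case False
    have "Re (cinner x ((X ^^ n) x)) \<le> norm x * norm ((X ^^ n) x)"
      using complex_Re_le_cmod cinner_Cauchy_Schwarz by (rule order_trans)
    also have "\<dots> \<le> (norm x)\<^sup>2"
      by (simp add: power2_eq_square mult_left_mono norm_X_pow_le)
    finally show ?thesis
      using sqrt_coeff_nonpos[of n] False by (simp add: mult_left_mono_neg)
  qed (simp add: power2_norm_eq_cinner)
  have "0 \<le> suminf sqrt_coeff * (norm x)\<^sup>2"
    using suminf_sqrt_coeff_nonneg by simp
  also have "\<dots> = (\<Sum>n. sqrt_coeff n * (norm x)\<^sup>2)"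
    by (rule suminf_mult2[OF summable_sqrt_coeff])
  also have "\<dots> \<le> (\<Sum>n. Re (of_real (sqrt_coeff n) * cinner x ((X ^^ n) x)))"
    by (rule suminf_le[OF term_ge summable_mult2[OF summable_sqrt_coeff]
          bounded_linear.summable[OF bounded_linear_Re summable]])
  also have "\<dots> = Re (cinner x (blinfun_apply root_series x))"
    unfolding cinner_root_series_right by (rule bounded_linear.suminf[OF bounded_linear_Re summable, symmetric])
  finally show ?thesis .
qed

definition root :: "'a \<Rightarrow> 'a" where
  "root x = sqrt M *\<^sub>R blinfun_apply root_series x"

lemma bounded_linear_root: "bounded_linear root"
  unfolding root_def
  by (rule bounded_linear_compose[OF bounded_linear_scaleR_right blinfun.bounded_linear_right])

lemma root_root: "root (root x) = G x"
proof -
  have "root (root x) = (sqrt M * sqrt M) *\<^sub>R (x - X x)"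
    by (simp add: root_def blinfun.scaleR_right root_series_square)
  also have "\<dots> = G x"
    using M_pos by (simp add: X_def)
  finally show ?thesis .
qed

lemma root_symmetric: "cinner (root x) y = cinner x (root y)"
  by (simp add: root_def cinner_scaleR_left cinner_scaleR_right root_series_symmetric)

lemma root_commute:
  assumes R: "bounded_linear R" and RG: "\<And>x. R (G x) = G (R x)"
  shows "R (root x) = root (R x)"
proof -
  have "R (X x) = X (R x)" for x
    using RG[of x] by (simp add: X_def linear_diff[OF bounded_linear.linear[OF R]]
        linear_scale[OF bounded_linear.linear[OF R]])
  then show ?thesis
    using root_series_commute[OF R] by (simp add: root_def linear_scale[OF bounded_linear.linear[OF R]])
qed

lemma bounded_self_adjoint_root: "bounded_self_adjoint root"
proof -
  have "root (c *\<^sub>C x) = c *\<^sub>C root x" for c x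
    by (rule root_commute[OF bounded_linear_scaleC_right G_scaleC[symmetric], symmetric])
  then show ?thesis
    by (simp add: bounded_self_adjoint_def bounded_opI[OF bounded_linear_root] root_symmetric)
qed

lemma positive_op_root: "positive_op root"
  using root_series_positive M_pos by (simp add: positive_op_def root_def cinner_scaleR_right)

text \<open>Uniqueness: another positive root \<open>R\<close> commutes with \<open>G = R\<^sup>2\<close>, hence with \<open>root\<close>, so
  \<open>(root + R) (root x - R x) = 0\<close>; positivity of both summands forces \<open>root x = R x\<close>.\<close>
lemma root_unique:
  assumes R: "bounded_self_adjoint R" "positive_op R" and RR: "\<And>x. R (R x) = G x"
  shows "R = root"
proof
  fix x
  have R_bl: "bounded_linear R" and R_sym: "\<And>x y. cinner (R x) y = cinner x (R y)"
    using R(1) bounded_op_bounded_linear by (auto simp: bounded_self_adjoint_def)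
  have R_lin: "linear R" and root_lin: "linear root"
    using R_bl bounded_linear_root by (simp_all add: bounded_linear.linear)
  have "R (G z) = G (R z)" for z
    by (metis RR)
  then have "R (root x) = root (R x)"
    by (rule root_commute[OF R_bl])
  let ?y = "root x - R x"
  have "root ?y + R ?y = 0"
    using \<open>R (root x) = root (R x)\<close> RR
    by (simp add: linear_diff[OF root_lin] linear_diff[OF R_lin] root_root)
  then have "Re (cinner ?y (root ?y)) + Re (cinner ?y (R ?y)) = 0"
    by (metis cinner_add_right cinner_zero_right plus_complex.sel(1) zero_complex.sel(1))
  then have "Re (cinner ?y (root ?y)) = 0" and "Re (cinner ?y (R ?y)) = 0"
    using positive_op_root R(2) unfolding positive_op_def by (smt (verit))+
  then have "root ?y = 0" and "R ?y = 0"
    using positive_op_eq_zero[OF root_lin root_symmetric positive_op_root]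
      positive_op_eq_zero[OF R_lin R_sym R(2)] by blast+
  then have "(norm ?y)\<^sup>2 = 0"
    unfolding power2_norm_eq_cinner cinner_diff_right
    by (simp add: root_symmetric[symmetric] R_sym[symmetric])
  then show "R x = root x"
    by simp
qed

lemma op_sqrt_eq_root: "op_sqrt G = root"
  unfolding op_sqrt_def
proof (rule the_equality)
  show "bounded_self_adjoint root \<and> positive_op root \<and> root \<circ> root = G"
    using bounded_self_adjoint_root positive_op_root root_root by auto
  show "R = root" if "bounded_self_adjoint R \<and> positive_op R \<and> R \<circ> R = G" for R
    using that root_unique by (metis comp_apply)
qed

lemma root_commute_self_adjoint:
  assumes A: "self_adjoint_op D A" and GA: "\<And>w. w \<in> D \<Longrightarrow> G w \<in> D \<and> A (G w) = G (A w)"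
    and v: "v \<in> D"
  shows "root v \<in> D \<and> A (root v) = root (A v)"
proof -
  have A_sym: "\<And>x y. x \<in> D \<Longrightarrow> y \<in> D \<Longrightarrow> cinner (A x) y = cinner x (A y)"
    using A by (simp add: self_adjoint_op_def)
  have X_comm: "X w \<in> D \<and> A (X w) = X (A w)" if w: "w \<in> D" for w
  proof (rule self_adjoint_op_adjointI[OF A])
    fix u assume u: "u \<in> D"
    show "cinner (X w) (A u) = cinner (X (A w)) u"
      using A_sym[OF w u] A_sym[OF _ u, of "G w"] GA[OF w]
      by (simp add: X_def cinner_diff_left cinner_scaleR_left)
  qed
  have X_pow_comm: "(X ^^ n) w \<in> D \<and> A ((X ^^ n) w) = (X ^^ n) (A w)" if "w \<in> D" for w n
    using that by (induction n) (auto simp: X_comm)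
  show ?thesis
  proof (rule self_adjoint_op_adjointI[OF A])
    fix u assume u: "u \<in> D"
    have "cinner ((X ^^ n) v) (A u) = cinner ((X ^^ n) (A v)) u" for n
      using A_sym[OF _ u, of "(X ^^ n) v"] X_pow_comm[OF v, of n] by simp
    then show "cinner (root v) (A u) = cinner (root (A v)) u"
      by (simp add: root_def cinner_scaleR_left cinner_root_series_left)
  qed
qed

end

lemma sqrt_construction_exists:
  fixes G :: "'a::chilbert_space \<Rightarrow> 'a"
  assumes "bounded_self_adjoint G" "positive_op G"
  obtains M where "sqrt_construction G M"
proof -
  obtain K where K: "\<And>x. norm (G x) \<le> K * norm x"
    using assms(1) unfolding bounded_self_adjoint_def bounded_op_def by blast
  have "norm (G x) \<le> (\<bar>K\<bar> + 1) * norm x" for x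
  proof -
    have "K * norm x \<le> (\<bar>K\<bar> + 1) * norm x"
      by (intro mult_right_mono) auto
    then show ?thesis
      using K[of x] by linarith
  qed
  then show ?thesis
    using assms by (intro that[of "\<bar>K\<bar> + 1"] sqrt_construction.intro) auto
qed

lemma op_sqrt_square:
  fixes G :: "'a::chilbert_space \<Rightarrow> 'a"
  assumes "bounded_self_adjoint G" "positive_op G"
  shows "bounded_self_adjoint (op_sqrt G)" "op_sqrt G (op_sqrt G x) = G x"
proof -
  obtain M where "sqrt_construction G M"
    using sqrt_construction_exists[OF assms] .
  then interpret sqrt_construction G M .
  show "bounded_self_adjoint (op_sqrt G)" "op_sqrt G (op_sqrt G x) = G x"
    by (simp_all add: op_sqrt_eq_root bounded_self_adjoint_root root_root)
qed

lemma op_sqrt_commute_self_adjoint: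
  fixes G :: "'a::chilbert_space \<Rightarrow> 'a"
  assumes "bounded_self_adjoint G" "positive_op G"
    and "self_adjoint_op D A" and "\<And>w. w \<in> D \<Longrightarrow> G w \<in> D \<and> A (G w) = G (A w)" and "v \<in> D"
  shows "op_sqrt G v \<in> D \<and> A (op_sqrt G v) = op_sqrt G (A v)"
proof -
  obtain M where "sqrt_construction G M"
    using sqrt_construction_exists[OF assms(1,2)] .
  then interpret sqrt_construction G M .
  show ?thesis
    unfolding op_sqrt_eq_root by (rule root_commute_self_adjoint[OF assms(3-5)])
qed

section \<open>Conjugation by the square root of a metric operator\<close>

lemma self_adjoint_op_commute_square:
  fixes S :: "'a::complex_inner \<Rightarrow> 'a"
  assumes A: "self_adjoint_op D A" and S_sym: "\<And>x y. cinner (S x) y = cinner x (S y)"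
    and conj_sym: "\<And>v w. v \<in> D \<Longrightarrow> w \<in> D \<Longrightarrow> cinner (S (A v)) (S w) = cinner (S v) (S (A w))"
    and w: "w \<in> D"
  shows "S (S w) \<in> D \<and> A (S (S w)) = S (S (A w))"
proof (rule self_adjoint_op_adjointI[OF A])
  fix v assume v: "v \<in> D"
  have "cinner (S (S w)) (A v) = cnj (cinner (S (A v)) (S w))"
    by (simp add: S_sym[of "S w"] cinner_conj[of "S w"])
  also have "\<dots> = cnj (cinner (S v) (S (A w)))"
    by (simp add: conj_sym[OF v w])
  also have "\<dots> = cinner (S (S (A w))) v"
    by (simp add: S_sym[of "S (A w)"] cinner_conj[of "S (A w)"])
  finally show "cinner (S (S w)) (A v) = cinner (S (S (A w))) v" .
qed

lemma self_adjoint_op_conj_inv: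
  fixes S :: "'a::complex_inner \<Rightarrow> 'a"
  assumes A: "self_adjoint_op D A" and S_sym: "\<And>x y. cinner (S x) y = cinner x (S y)"
    and S: "bij S"
    and conj_adj: "adjoint_dom {x. inv S x \<in> D} (\<lambda>x. S (A (inv S x))) \<subseteq> {x. inv S x \<in> D}"
    and y: "S y \<in> D"
  shows "inv S y \<in> D"
proof -
  have S_inv: "S (inv S x) = x" for x
    using S by (simp add: bij_is_surj surj_f_inv_f)
  have "cinner y (S (A (inv S x))) = cinner (inv S (A (S y))) x" if x: "inv S x \<in> D" for x
  proof -
    have "cinner y (S (A (inv S x))) = cinner (A (S y)) (inv S x)"
      using A y x by (simp add: S_sym[symmetric] self_adjoint_op_def)
    also have "\<dots> = cinner (inv S (A (S y))) x"
      by (metis S_inv S_sym)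
    finally show ?thesis .
  qed
  then have "y \<in> adjoint_dom {x. inv S x \<in> D} (\<lambda>x. S (A (inv S x)))"
    unfolding adjoint_dom_def by blast
  then show ?thesis
    using conj_adj by blast
qed

lemma strictly_positive_op_imp_positive_op: "strictly_positive_op T \<Longrightarrow> positive_op T"
  unfolding strictly_positive_op_def positive_op_def
  by (metis cinner_zero_left less_imp_le order_refl zero_complex.sel(1))

lemma bij_if_square_bij:
  assumes "\<And>x. S (S x) = G x" and "bij G"
  shows "bij S"
proof (rule bijI)
  show "inj S"
    by (rule injI) (metis assms bij_is_inj injD)
  show "surj S"
    by (metis assms bij_is_surj rangeI surj_def)
qed

theorem proposition3p3:
  fixes D :: "'a::chilbert_space set" and A :: "'a \<Rightarrow> 'a" and G :: "'a \<Rightarrow> 'a" and \<psi> :: 'a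
  assumes "separable_space TYPE('a)"
    and "self_adjoint_op D A"
    and "metric_operator G"
    and "self_adjoint_op (conj_dom G D) (conj_op G A)"
    and "\<psi> \<noteq> 0"
  shows "(\<psi> \<in> conj_dom G D \<longleftrightarrow> \<psi> \<in> D) \<and>
    (\<psi> \<in> D \<longrightarrow>
      cinner \<psi> (conj_op G A \<psi>) / complex_of_real ((norm \<psi>)\<^sup>2)
        = cinner \<psi> (A \<psi>) / complex_of_real ((norm \<psi>)\<^sup>2))"
proof -
  let ?S = "op_sqrt G"
  have G: "bounded_self_adjoint G" "positive_op G" "bij G"
    using assms(3) strictly_positive_op_imp_positive_op unfolding metric_operator_def by blast+
  have S_sym: "\<And>x y. cinner (?S x) y = cinner x (?S y)" and S_square: "\<And>x. ?S (?S x) = G x"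
    using op_sqrt_square[OF G(1,2)] unfolding bounded_self_adjoint_def by blast+
  have S_bij: "bij ?S"
    using S_square G(3) by (rule bij_if_square_bij)
  then have S_inv: "\<And>x. ?S (inv ?S x) = x" "\<And>x. inv ?S (?S x) = x"
    by (simp_all add: bij_is_surj bij_is_inj surj_f_inv_f)
  from assms(4) have conj_sym_inv: "\<And>x y. inv ?S x \<in> D \<Longrightarrow> inv ?S y \<in> D \<Longrightarrow>
        cinner (?S (A (inv ?S x))) y = cinner x (?S (A (inv ?S y)))"
    and conj_adj: "adjoint_dom {x. inv ?S x \<in> D} (\<lambda>x. ?S (A (inv ?S x))) \<subseteq> {x. inv ?S x \<in> D}"
    unfolding self_adjoint_op_def conj_dom_def conj_op_def op_inv_sqrt_def by blast+
  have conj_sym: "\<And>v w. v \<in> D \<Longrightarrow> w \<in> D \<Longrightarrow> cinner (?S (A v)) (?S w) = cinner (?S v) (?S (A w))"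
    using conj_sym_inv[of "?S _" "?S _"] by (simp add: S_inv)
  have S_comm: "\<And>v. v \<in> D \<Longrightarrow> ?S v \<in> D \<and> A (?S v) = ?S (A v)"
    using op_sqrt_commute_self_adjoint[OF G(1,2) assms(2)]
      self_adjoint_op_commute_square[OF assms(2) S_sym conj_sym] S_square by metis
  have S_inv_D: "\<And>y. ?S y \<in> D \<Longrightarrow> inv ?S y \<in> D"
    by (rule self_adjoint_op_conj_inv[OF assms(2) S_sym S_bij conj_adj])
  have "\<psi> \<in> conj_dom G D \<longleftrightarrow> \<psi> \<in> D"
    unfolding conj_dom_def op_inv_sqrt_def using S_comm S_inv_D S_inv by (metis mem_Collect_eq)
  moreover have "conj_op G A \<psi> = A \<psi>" if "\<psi> \<in> D"
    using that S_comm S_inv_D S_inv unfolding conj_op_def op_inv_sqrt_def by metis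
  ultimately show ?thesis
    by simp
qed

end
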